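(* Let $\alpha>0$ and let $\eta_1,\eta_2\in W^{1,2}_{\mathrm{loc}}(\mathbb R)$ be real $2\pi$-periodic functions, and set $f(z)=|z|^\alpha(\eta_1(\arg z)+i\eta_2(\arg z))$ for $z\ne0$. Let $\mu_0,\nu_0:\mathbb R\to\mathbb R$ be bounded measurable $2\pi$-periodic functions with $\||\mu_0|+|\nu_0|\|_\infty<1$, and set $\mu(z)=-\mu_0(\arg z)\,z\bar z^{-1}$, $\nu(z)=-\nu_0(\arg z)$. If $f$ satisfies $\bar\partial f=\mu\partial f+\nu\overline{\partial f}$ a.e., then $$\dot\eta_1=-\alpha k_2^{-1}\eta_2,\qquad \dot\eta_2=\alpha k_1\eta_1,$$ where $k_1=\frac{1+\mu_0+\nu_0}{1-\mu_0-\nu_0}>0$ and $k_2=\frac{1-\mu_0+\nu_0}{1+\mu_0-\nu_0}>0$. Conversely, if $(\eta_1,\eta_2)$ ($2\pi$-periodic, in $W^{1,2}_{\mathrm{loc}}$) satisfies $\dot\eta_1=-\alpha k_2^{-1}\eta_2$, $\dot\eta_2=\alpha k_1\eta_1$ for some $\alpha>0$ and some $2\pi$-periodic functions $k_1,k_2>0$ bounded from above and from below away from zero, then $f(z)=|z|^\alpha(\eta_1(\arg z)+i\eta_2(\arg z))$ satisfies $\bar\partial f=\mu\partial f+\nu\overline{\partial f}$ with $\mu(z)=-\mu_0(\arg z)z\bar z^{-1}$, $\nu(z)=-\nu_0(\arg z)$, where $$\mu_0=\frac{k_1-k_2}{1+k_1+k_2+k_1k_2},\qquad \nu_0=\fr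ac{k_1k_2-1}{1+k_1+k_2+k_1k_2}.$$
   Context: $\bar\partial=\frac12(\partial_x+i\partial_y)$, $\partial=\frac12(\partial_x-i\partial_y)$; a dot denotes derivative with respect to the angular variable $\theta=\arg z$. *)

theory Defs
  imports "HOL-Analysis.Analysis"
begin

definition periodic2pi :: "(real \<Rightarrow> real) \<Rightarrow> bool" where
  "periodic2pi g \<longleftrightarrow> (\<forall>t. g (t + 2 * pi) = g t)"

text \<open>Sobolev space W^{1,2}_loc(R): eta is the integral of a locally
  square-integrable (weak derivative) function g.\<close>
definition W12_loc :: "(real \<Rightarrow> real) \<Rightarrow> bool" where
  "W12_loc \<eta> \<longleftrightarrow> (\<exists>g. g \<in> borel_measurable lborel \<and>
      (\<forall>a b. a \<le> b \<longrightarrow>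
         set_integrable lborel {a..b} g \<and>
         set_integrable lborel {a..b} (\<lambda>t. (g t)\<^sup>2) \<and>
         \<eta> b - \<eta> a = (\<integral>t\<in>{a..b}. g t \<partial>lborel)))"

text \<open>Wirtinger derivatives (via the real differential, D 1 = f_x, D i = f_y).\<close>
definition dz :: "(complex \<Rightarrow> complex) \<Rightarrow> complex \<Rightarrow> complex" where
  "dz f z = (frechet_derivative f (at z) 1 - \<i> * frechet_derivative f (at z) \<i>) / 2"

definition dzbar :: "(complex \<Rightarrow> complex) \<Rightarrow> complex \<Rightarrow> complex" where
  "dzbar f z = (frechet_derivative f (at z) 1 + \<i> * frechet_derivative f (at z) \<i>) / 2"

definition beltrami_ae ::
  "(complex \<Rightarrow> complex) \<Rightarrow> (complex \<Rightarrow> complex) \<Rightarrow> (complex \<Rightarrow> complex) \<Rightarrow> bool" where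
  "beltrami_ae f \<mu> \<nu> \<longleftrightarrow>
     (AE z in lborel. f differentiable (at z) \<and>
        dzbar f z = \<mu> z * dz f z + \<nu> z * cnj (dz f z))"

definition polar_map :: "real \<Rightarrow> (real \<Rightarrow> real) \<Rightarrow> (real \<Rightarrow> real) \<Rightarrow> complex \<Rightarrow> complex" where
  "polar_map \<alpha> \<eta>1 \<eta>2 z =
     (if z = 0 then 0 else complex_of_real (cmod z powr \<alpha>) * Complex (\<eta>1 (Arg z)) (\<eta>2 (Arg z)))"

definition mu_of :: "(real \<Rightarrow> real) \<Rightarrow> complex \<Rightarrow> complex" where
  "mu_of \<mu>0 z = - complex_of_real (\<mu>0 (Arg z)) * z / cnj z"

definition nu_of :: "(real \<Rightarrow> real) \<Rightarrow> complex \<Rightarrow> complex" where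
  "nu_of \<nu>0 z = - complex_of_real (\<nu>0 (Arg z))"

end

theory Submission
  imports Defs
begin

(* In logarithmic coordinates w = Ln z the map is w |-> exp (alpha Re w) eta (Im w), eta = eta1 + i eta2.
   The chain rule through the holomorphic Ln gives, with r = |z| powr alpha and eta taken at t = Arg z,
     dz f = r (alpha eta - i eta') / (2 z),     dzbar f = r (alpha eta + i eta') / (2 cnj z).
   The factor z / cnj z in mu makes every term of the Beltrami equation carry r / (2 cnj z), so at z the
   equation is the real linear system alpha eta + i eta' = - mu0 Y - nu0 cnj Y, Y = alpha eta - i eta',
   for (eta1', eta2'); solving it gives the ODE, and the coefficient maps (mu0, nu0) -> (k1, k2) and back
   are mutually inverse.
   Null sets pass between the plane and the angle variable because log-polar coordinates are a local
   diffeomorphism and, by Fubini, R x B is null iff B is; periodicity carries statements from (-pi, pi)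
   to all of R. Differentiability of f at a single point of the ray Arg z = t already yields
   differentiability of eta1, eta2 at t. *)

lemma negligible_iff_subset_null_set:
  "negligible S \<longleftrightarrow> (\<exists>N \<in> null_sets lborel. S \<subseteq> N)"
  by (simp add: negligible_iff_null_sets null_sets_completion_iff2)

lemma AE_lborel_iff_negligible:
  fixes P :: "'a::euclidean_space \<Rightarrow> bool"
  shows "(AE x in lborel. P x) \<longleftrightarrow> negligible {x. \<not> P x}"
  by (metis AE_completion_iff eventually_ae_filter_negligible negligible_subset order_refl)

lemma negligible_UNIV_TimesD:
  fixes B :: "'b::euclidean_space set"
  assumes "negligible ((UNIV :: 'a::euclidean_space set) \<times> B)"
  shows "negligible B"
proof -
  obtain P :: "('a \<times> 'b) set" where P: "P \<in> null_sets lborel" "UNIV \<times> B \<subseteq> P"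
    using assms unfolding negligible_iff_subset_null_set by blast
  have "AE x in lborel \<Otimes>\<^sub>M lborel. x \<notin> P"
    unfolding lborel_prod using AE_not_in[OF P(1)] .
  then have "AE s in lborel. AE t in lborel. (s, t) \<notin> P"
    by (rule lborel_pair.AE_pair)
  moreover have "ae_filter (lborel :: 'a measure) \<noteq> bot"
    by (simp add: ae_filter_eq_bot_iff)
  ultimately obtain s :: 'a where "AE t in lborel. (s, t) \<notin> P"
    using eventually_happens' by blast
  then have "negligible {t. (s, t) \<in> P}"
    by (simp add: AE_lborel_iff_negligible)
  then show ?thesis
    by (rule negligible_subset) (use P(2) in auto)
qed

lemma negligible_UNIV_Times:
  fixes B :: "'b::euclidean_space set"
  assumes "negligible B"
  shows "negligible ((UNIV :: 'a::euclidean_space set) \<times> B)"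
proof -
  obtain N :: "'b set" where N: "N \<in> null_sets lborel" "B \<subseteq> N"
    using assms unfolding negligible_iff_subset_null_set by blast
  have "(UNIV :: 'a set) \<times> N \<in> null_sets (lborel \<Otimes>\<^sub>M lborel)"
    by (rule lborel.times_in_null_sets2) (use N(1) in auto)
  then have "(UNIV :: 'a set) \<times> N \<in> null_sets lborel"
    unfolding lborel_prod .
  then have "negligible ((UNIV :: 'a set) \<times> N)"
    unfolding negligible_iff_subset_null_set by blast
  then show ?thesis
    by (rule negligible_subset) (use N(2) in auto)
qed

lemma periodic_shift_of_int:
  assumes "\<And>t. Q (t + p) = Q t"
  shows "Q (t + of_int k * p) = Q t"
proof (induction k arbitrary: t rule: int_induct[where k = 0])
  case base
  show ?case by simp
next
  case (step1 i)
  have "Q (t + of_int (i + 1) * p) = Q ((t + of_int i * p) + p)"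
    by (simp add: algebra_simps)
  then show ?case using assms step1.IH by simp
next
  case (step2 i)
  have "Q t = Q ((t + of_int (i - 1) * p) + p)"
    using step2.IH by (simp add: algebra_simps)
  then show ?case using assms by simp
qed

lemma AE_periodic_if_negligible_on_period:
  fixes p a :: real
  assumes "p > 0" and periodic: "\<And>t. Q (t + p) = Q t"
    and "negligible {t. a < t \<and> t < a + p \<and> \<not> Q t}"
  shows "AE t in lborel. Q t"
proof -
  define B where "B = insert a {t. a < t \<and> t < a + p \<and> \<not> Q t}"
  have "{t. \<not> Q t} \<subseteq> (\<Union>k::int. (+) (of_int k * p) ` B)"
  proof
    fix t assume "t \<in> {t. \<not> Q t}"
    define k where "k = \<lfloor>(t - a) / p\<rfloor>"
    have "of_int k \<le> (t - a) / p" "(t - a) / p < of_int k + 1"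
      unfolding k_def by linarith+
    then have "a \<le> t - of_int k * p" "t - of_int k * p < a + p"
      using \<open>p > 0\<close> by (simp_all add: field_simps)
    moreover have "\<not> Q (t - of_int k * p)"
      using periodic_shift_of_int[of Q p "t - of_int k * p" k] periodic \<open>t \<in> _\<close> by simp
    ultimately have "t - of_int k * p \<in> B"
      unfolding B_def by auto
    then show "t \<in> (\<Union>k::int. (+) (of_int k * p) ` B)"
      by (intro UN_I[of k]) (auto intro: image_eqI[of _ _ "t - of_int k * p"])
  qed
  moreover have "negligible B"
    using assms(3) by (simp add: B_def)
  then have "negligible ((+) (of_int k * p) ` B)" for k :: int
    by (rule negligible_translation)
  then have "negligible (\<Union>k::int. (+) (of_int k * p) ` B)"
    by (intro negligible_countable_Union) auto
  ultimately have "negligible {t. \<not> Q t}"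
    by (rule negligible_subset[rotated])
  then show ?thesis
    by (simp add: AE_lborel_iff_negligible)
qed

lemma exp_notin_nonpos_Reals:
  assumes "-pi < Im w" "Im w < pi"
  shows "exp w \<notin> \<real>\<^sub>\<le>\<^sub>0"
proof
  assume "exp w \<in> \<real>\<^sub>\<le>\<^sub>0"
  then have "Arg (exp w) = pi"
    using exp_not_eq_zero[of w] by (auto simp: Arg_eq_pi complex_nonpos_Reals_iff complex_eq_iff)
  then show False
    using Arg_exp[of w] assms by simp
qed

lemma negligible_Arg_vimage:
  assumes "negligible N"
  shows "negligible {z. z \<noteq> 0 \<and> Arg z \<in> N}"
proof -
  define P where "P = (\<lambda>x :: real \<times> real. exp (Complex (fst x) (snd x)))"
  have "((\<lambda>x. Complex (fst x) (snd x)) has_derivative (\<lambda>h. Complex (fst h) (snd h))) (at x)" for x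
    unfolding Complex_eq
    by (intro has_derivative_add has_derivative_mult_right has_derivative_of_real has_derivative_fst
        has_derivative_snd has_derivative_ident)
  then have "P differentiable (at x)" for x
    unfolding P_def
    by (rule differentiable_compose[OF field_differentiable_imp_differentiable[OF field_differentiable_within_exp]
          differentiableI])
  then have "negligible (P ` (UNIV \<times> N))"
    using negligible_UNIV_Times[OF assms]
    by (intro negligible_differentiable_image_negligible) (auto intro: differentiable_at_imp_differentiable_on)
  moreover have "z = P (Re (Ln z), Arg z)" if "z \<noteq> 0" for z
    unfolding P_def fst_conv snd_conv Arg_eq_Im_Ln[OF that] complex.collapse exp_Ln[OF that] ..
  then have "{z. z \<noteq> 0 \<and> Arg z \<in> N} \<subseteq> P ` (UNIV \<times> N)"
    by blast
  ultimately show ?thesis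
    by (rule negligible_subset)
qed

lemma negligible_rays_contained_in:
  assumes "negligible Z"
  shows "negligible {t. -pi < t \<and> t < pi \<and> (\<forall>s. exp (Complex s t) \<in> Z)}" (is "negligible ?T")
proof -
  define Q where "Q = (\<lambda>z. (Re (Ln z), Im (Ln z)))"
  have "Q differentiable (at z)" if "z \<notin> \<real>\<^sub>\<le>\<^sub>0" for z
    unfolding Q_def
    by (rule differentiable_compose[where f = "\<lambda>w. (Re w, Im w)" and g = Ln,
      OF bounded_linear_imp_differentiable[OF bounded_linear_Pair[OF bounded_linear_Re bounded_linear_Im]]
         field_differentiable_imp_differentiable[OF field_differentiable_at_Ln[OF that]]])
  then have "negligible (Q ` (Z - \<real>\<^sub>\<le>\<^sub>0))"
    using assms by (intro negligible_differentiable_image_negligible)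
      (auto intro: negligible_subset differentiable_at_imp_differentiable_on)
  moreover have "(s, t) = Q (exp (Complex s t))" "exp (Complex s t) \<notin> \<real>\<^sub>\<le>\<^sub>0"
    if "-pi < t" "t < pi" for s t
    using that exp_notin_nonpos_Reals[of "Complex s t"] by (simp_all add: Q_def)
  then have "UNIV \<times> ?T \<subseteq> Q ` (Z - \<real>\<^sub>\<le>\<^sub>0)"
    by fastforce
  ultimately have "negligible ((UNIV :: real set) \<times> ?T)"
    by (rule negligible_subset)
  then show ?thesis
    by (rule negligible_UNIV_TimesD)
qed

(* Wirtinger derivatives of f when f is, to first order, a real-linear map after a holomorphic
   change of variables with derivative c. *)
lemma dz_dzbar_eq:
  assumes "(f has_derivative (\<lambda>h. Re (c * h) *\<^sub>R A + Im (c * h) *\<^sub>R B)) (at z)"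
  shows "dz f z = c * (A - \<i> * B) / 2" and "dzbar f z = cnj c * (A + \<i> * B) / 2"
  using frechet_derivative_at[OF assms, symmetric]
  by (simp_all add: dz_def dzbar_def complex_eq_iff algebra_simps)

lemma polar_map_eq_on_slit_plane:
  assumes "v \<notin> \<real>\<^sub>\<le>\<^sub>0"
  shows "polar_map \<alpha> \<eta>1 \<eta>2 v = exp (\<alpha> * Re (Ln v)) *\<^sub>R Complex (\<eta>1 (Im (Ln v))) (\<eta>2 (Im (Ln v)))"
  using assms by (auto simp: polar_map_def powr_def Arg_eq_Im_Ln scaleR_conv_of_real mult.commute)

lemma has_derivative_log_polar_map:
  assumes "(\<eta>1 has_real_derivative d1) (at (Im w))" and "(\<eta>2 has_real_derivative d2) (at (Im w))"
  shows "((\<lambda>u. exp (\<alpha> * Re u) *\<^sub>R Complex (\<eta>1 (Im u)) (\<eta>2 (Im u))) has_derivative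
           (\<lambda>k. Re k *\<^sub>R (\<alpha> * exp (\<alpha> * Re w)) *\<^sub>R Complex (\<eta>1 (Im w)) (\<eta>2 (Im w))
              + Im k *\<^sub>R exp (\<alpha> * Re w) *\<^sub>R Complex d1 d2)) (at w)"
proof -
  have "((\<lambda>u. \<eta>1 (Im u)) has_derivative (\<lambda>k. Im k * d1)) (at w)"
    by (rule DERIV_compose_FDERIV[OF assms(1) has_derivative_Im[OF has_derivative_ident]])
  moreover have "((\<lambda>u. \<eta>2 (Im u)) has_derivative (\<lambda>k. Im k * d2)) (at w)"
    by (rule DERIV_compose_FDERIV[OF assms(2) has_derivative_Im[OF has_derivative_ident]])
  moreover have "((\<lambda>u. exp (\<alpha> * Re u)) has_derivative (\<lambda>k. Re k * (exp (\<alpha> * Re w) * \<alpha>))) (at w)"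
    by (rule DERIV_compose_FDERIV[where f = "\<lambda>x. exp (\<alpha> * x)"]) (auto intro!: derivative_eq_intros)
  ultimately have "((\<lambda>u. exp (\<alpha> * Re u) *\<^sub>R (of_real (\<eta>1 (Im u)) + \<i> * of_real (\<eta>2 (Im u)))) has_derivative
      (\<lambda>k. exp (\<alpha> * Re w) *\<^sub>R (of_real (Im k * d1) + \<i> * of_real (Im k * d2))
        + (Re k * (exp (\<alpha> * Re w) * \<alpha>)) *\<^sub>R (of_real (\<eta>1 (Im w)) + \<i> * of_real (\<eta>2 (Im w))))) (at w)"
    by (intro has_derivative_scaleR has_derivative_add has_derivative_mult_right has_derivative_of_real)
  then show ?thesis
    unfolding Complex_eq by (rule has_derivative_eq_rhs) (simp add: fun_eq_iff scaleR_conv_of_real algebra_simps)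
qed

lemma has_derivative_polar_map:
  assumes z: "z \<notin> \<real>\<^sub>\<le>\<^sub>0"
    and d1: "(\<eta>1 has_real_derivative d1) (at (Arg z))"
    and d2: "(\<eta>2 has_real_derivative d2) (at (Arg z))"
  shows "(polar_map \<alpha> \<eta>1 \<eta>2 has_derivative
           (\<lambda>h. Re (inverse z * h) *\<^sub>R (\<alpha> * cmod z powr \<alpha>) *\<^sub>R Complex (\<eta>1 (Arg z)) (\<eta>2 (Arg z))
              + Im (inverse z * h) *\<^sub>R cmod z powr \<alpha> *\<^sub>R Complex d1 d2)) (at z)"
proof -
  have z0: "z \<noteq> 0"
    using z by auto
  then have arg: "Arg z = Im (Ln z)" and modulus: "cmod z powr \<alpha> = exp (\<alpha> * Re (Ln z))"
    by (simp_all add: Arg_eq_Im_Ln powr_def mult.commute)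
  have "(Ln has_derivative (\<lambda>h. inverse z * h)) (at z)"
    using has_field_derivative_Ln[OF z] unfolding has_field_derivative_def .
  from has_derivative_compose[OF this has_derivative_log_polar_map[of \<eta>1 d1 "Ln z" \<eta>2 d2 \<alpha>]]
  have "((\<lambda>v. exp (\<alpha> * Re (Ln v)) *\<^sub>R Complex (\<eta>1 (Im (Ln v))) (\<eta>2 (Im (Ln v)))) has_derivative
           (\<lambda>h. Re (inverse z * h) *\<^sub>R (\<alpha> * cmod z powr \<alpha>) *\<^sub>R Complex (\<eta>1 (Arg z)) (\<eta>2 (Arg z))
              + Im (inverse z * h) *\<^sub>R cmod z powr \<alpha> *\<^sub>R Complex d1 d2)) (at z)"
    using d1 d2 unfolding arg modulus by simp
  then show ?thesis
    by (rule has_derivative_transform_within_open[where s = "- \<real>\<^sub>\<le>\<^sub>0"])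
      (use z in \<open>auto simp: polar_map_eq_on_slit_plane closed_nonpos_Reals_complex\<close>)
qed

lemma beltrami_at_polar_map_iff:
  fixes \<alpha> :: real and \<eta>1 \<eta>2 :: "real \<Rightarrow> real"
  assumes z: "z \<notin> \<real>\<^sub>\<le>\<^sub>0"
    and "(\<eta>1 has_real_derivative d1) (at (Arg z))" "(\<eta>2 has_real_derivative d2) (at (Arg z))"
  defines "F \<equiv> polar_map \<alpha> \<eta>1 \<eta>2" and "t \<equiv> Arg z"
  shows "dzbar F z = mu_of \<mu>0 z * dz F z + nu_of \<nu>0 z * cnj (dz F z) \<longleftrightarrow>
           \<alpha> * \<eta>1 t - d2 = - (\<mu>0 t + \<nu>0 t) * (\<alpha> * \<eta>1 t + d2) \<and>
           \<alpha> * \<eta>2 t + d1 = (\<nu>0 t - \<mu>0 t) * (\<alpha> * \<eta>2 t - d1)"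
proof -
  define r where "r = cmod z powr \<alpha>"
  define \<eta> where "\<eta> = Complex (\<eta>1 t) (\<eta>2 t)"
  define X where "X = \<alpha> * \<eta> + \<i> * Complex d1 d2"
  define Y where "Y = \<alpha> * \<eta> - \<i> * Complex d1 d2"
  have z0: "z \<noteq> 0"
    using z by auto
  have r: "r > 0"
    using z0 by (simp add: r_def)
  note D = has_derivative_polar_map[OF assms(1-3), of \<alpha>, folded F_def t_def r_def]
  have dz: "dz F z = inverse z * (r / 2) * Y" and dzbar: "dzbar F z = cnj (inverse z) * (r / 2) * X"
    unfolding dz_dzbar_eq[OF D] by (simp_all add: X_def Y_def \<eta>_def scaleR_conv_of_real field_simps)
  have "mu_of \<mu>0 z * dz F z + nu_of \<nu>0 z * cnj (dz F z) =
      cnj (inverse z) * (r / 2) * (- \<mu>0 t * Y - \<nu>0 t * cnj Y)"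
    unfolding dz using z0 by (simp add: mu_of_def nu_of_def t_def field_simps)
  then have "dzbar F z = mu_of \<mu>0 z * dz F z + nu_of \<nu>0 z * cnj (dz F z) \<longleftrightarrow>
      X = - \<mu>0 t * Y - \<nu>0 t * cnj Y"
    unfolding dzbar using z0 r by simp
  also have "\<dots> \<longleftrightarrow> \<alpha> * \<eta>1 t - d2 = - (\<mu>0 t + \<nu>0 t) * (\<alpha> * \<eta>1 t + d2) \<and>
           \<alpha> * \<eta>2 t + d1 = (\<nu>0 t - \<mu>0 t) * (\<alpha> * \<eta>2 t - d1)"
    by (simp add: X_def Y_def \<eta>_def complex_eq_iff algebra_simps)
  finally show ?thesis .
qed

lemma differentiable_polar_map_components:
  assumes t: "-pi < t" "t < pi"
    and F: "polar_map \<alpha> \<eta>1 \<eta>2 differentiable (at (exp (Complex s t)))"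
  shows "\<eta>1 differentiable (at t)" and "\<eta>2 differentiable (at t)"
proof -
  define g where "g = (\<lambda>t'. polar_map \<alpha> \<eta>1 \<eta>2 (exp (Complex s t')) / of_real (exp s powr \<alpha>))"
  have "((\<lambda>t'. Complex s t') has_derivative (\<lambda>h. \<i> * of_real h)) (at t)"
    unfolding Complex_eq by (auto intro!: derivative_eq_intros)
  then have "(\<lambda>t'. exp (Complex s t')) differentiable (at t)"
    by (rule differentiable_compose[OF field_differentiable_imp_differentiable[OF field_differentiable_within_exp]
          differentiableI])
  then have "(\<lambda>t'. polar_map \<alpha> \<eta>1 \<eta>2 (exp (Complex s t'))) differentiable (at t)"
    by (rule differentiable_compose[where g = "\<lambda>t'. exp (Complex s t')", OF F])
  then have "g differentiable (at t)"
    unfolding g_def by (intro differentiable_divide differentiable_const) auto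
  then have Re: "(\<lambda>t'. Re (g t')) differentiable (at t)" and Im: "(\<lambda>t'. Im (g t')) differentiable (at t)"
    by (auto intro: differentiable_compose bounded_linear_imp_differentiable bounded_linear_Re
        bounded_linear_Im)
  have "g t' = Complex (\<eta>1 t') (\<eta>2 t')" if "-pi < t'" "t' < pi" for t'
    using that by (simp add: g_def polar_map_def Arg_exp)
  then have near: "Re (g t') = \<eta>1 t'" "Im (g t') = \<eta>2 t'" if "dist t' t < min (t + pi) (pi - t)" for t'
    using that by (auto simp: dist_real_def)
  show "\<eta>1 differentiable (at t)"
    by (rule differentiable_transform_within[OF Re, where d = "min (t + pi) (pi - t)"]) (use t near in auto)
  show "\<eta>2 differentiable (at t)"
    by (rule differentiable_transform_within[OF Im, where d = "min (t + pi) (pi - t)"]) (use t near in auto)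
qed

definition polar_ode ::
  "real \<Rightarrow> (real \<Rightarrow> real) \<Rightarrow> (real \<Rightarrow> real) \<Rightarrow> (real \<Rightarrow> real) \<Rightarrow> (real \<Rightarrow> real) \<Rightarrow> real \<Rightarrow> bool" where
  "polar_ode \<alpha> \<eta>1 \<eta>2 k1 k2 t \<longleftrightarrow>
     (\<eta>1 has_real_derivative (- \<alpha> / k2 t * \<eta>2 t)) (at t) \<and> (\<eta>2 has_real_derivative (\<alpha> * k1 t * \<eta>1 t)) (at t)"

lemma beltrami_relation_iff_ode:
  fixes m n \<alpha> a b d1 d2 :: real
  assumes "1 - m - n \<noteq> 0" "1 - m + n \<noteq> 0"
  shows "(\<alpha> * a - d2 = - (m + n) * (\<alpha> * a + d2) \<and> \<alpha> * b + d1 = (n - m) * (\<alpha> * b - d1)) \<longleftrightarrow>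
         (d1 = - \<alpha> / ((1 - m + n) / (1 + m - n)) * b \<and> d2 = \<alpha> * ((1 + m + n) / (1 - m - n)) * a)"
  using assms by (auto simp: field_simps)

lemma dilatations_of_beltrami_coefficients:
  fixes k1 k2 :: real
  assumes "k1 > 0" "k2 > 0"
  defines "m \<equiv> (k1 - k2) / (1 + k1 + k2 + k1 * k2)" and "n \<equiv> (k1 * k2 - 1) / (1 + k1 + k2 + k1 * k2)"
  shows "1 - m - n \<noteq> 0" "1 - m + n \<noteq> 0" "(1 + m + n) / (1 - m - n) = k1" "(1 - m + n) / (1 + m - n) = k2"
proof -
  have "0 < 1 + k1 + k2 + k1 * k2" "0 < 1 + k1" "0 < 1 + k2"
    using assms(1,2) by (simp_all add: add_pos_pos)
  then have e: "1 - m - n = 2 / (1 + k1)" "1 + m + n = 2 * k1 / (1 + k1)"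
    "1 - m + n = 2 * k2 / (1 + k2)" "1 + m - n = 2 / (1 + k2)"
    unfolding m_def n_def by (simp_all add: divide_simps) (simp_all add: algebra_simps)
  show "1 - m - n \<noteq> 0" "1 - m + n \<noteq> 0" "(1 + m + n) / (1 - m - n) = k1" "(1 - m + n) / (1 + m - n) = k2"
    unfolding e using assms(1,2) by (simp_all add: field_simps)
qed

lemma polar_ode_if_beltrami_at:
  fixes \<alpha> s t :: real and \<eta>1 \<eta>2 \<mu>0 \<nu>0 :: "real \<Rightarrow> real"
  defines "F \<equiv> polar_map \<alpha> \<eta>1 \<eta>2" and "z \<equiv> exp (Complex s t)"
  assumes t: "-pi < t" "t < pi" and bound: "\<bar>\<mu>0 t\<bar> + \<bar>\<nu>0 t\<bar> < 1"
    and diff: "F differentiable (at z)"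
    and eq: "dzbar F z = mu_of \<mu>0 z * dz F z + nu_of \<nu>0 z * cnj (dz F z)"
  shows "polar_ode \<alpha> \<eta>1 \<eta>2 (\<lambda>t. (1 + \<mu>0 t + \<nu>0 t) / (1 - \<mu>0 t - \<nu>0 t))
           (\<lambda>t. (1 - \<mu>0 t + \<nu>0 t) / (1 + \<mu>0 t - \<nu>0 t)) t"
proof -
  obtain d1 d2 where d1: "(\<eta>1 has_real_derivative d1) (at t)" and d2: "(\<eta>2 has_real_derivative d2) (at t)"
    using differentiable_polar_map_components[OF t diff[unfolded F_def z_def]]
    by (auto simp: real_differentiable_def)
  have z: "z \<notin> \<real>\<^sub>\<le>\<^sub>0" and arg: "Arg z = t"
    using t exp_notin_nonpos_Reals[of "Complex s t"] by (simp_all add: z_def Arg_exp)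
  have "1 - \<mu>0 t - \<nu>0 t \<noteq> 0" "1 - \<mu>0 t + \<nu>0 t \<noteq> 0"
    using bound by linarith+
  from eq[unfolded F_def beltrami_at_polar_map_iff[OF z d1[folded arg] d2[folded arg]] arg
      beltrami_relation_iff_ode[OF this]]
  show ?thesis
    using d1 d2 by (simp add: polar_ode_def)
qed

lemma beltrami_at_if_polar_ode:
  fixes \<alpha> :: real and \<eta>1 \<eta>2 k1 k2 :: "real \<Rightarrow> real"
  defines "\<mu>0 \<equiv> \<lambda>t. (k1 t - k2 t) / (1 + k1 t + k2 t + k1 t * k2 t)"
    and "\<nu>0 \<equiv> \<lambda>t. (k1 t * k2 t - 1) / (1 + k1 t + k2 t + k1 t * k2 t)"
    and "F \<equiv> polar_map \<alpha> \<eta>1 \<eta>2"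
  assumes z: "z \<notin> \<real>\<^sub>\<le>\<^sub>0" and k: "k1 (Arg z) > 0" "k2 (Arg z) > 0"
    and ode: "polar_ode \<alpha> \<eta>1 \<eta>2 k1 k2 (Arg z)"
  shows "F differentiable (at z) \<and> dzbar F z = mu_of \<mu>0 z * dz F z + nu_of \<nu>0 z * cnj (dz F z)"
proof -
  let ?t = "Arg z"
  have d1: "(\<eta>1 has_real_derivative - \<alpha> / k2 ?t * \<eta>2 ?t) (at ?t)"
    and d2: "(\<eta>2 has_real_derivative \<alpha> * k1 ?t * \<eta>1 ?t) (at ?t)"
    using ode by (simp_all add: polar_ode_def)
  note k_eq = dilatations_of_beltrami_coefficients[OF k]
  have "F differentiable (at z)"
    unfolding F_def using has_derivative_polar_map[OF z d1 d2] by (rule differentiableI)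
  moreover have "dzbar F z = mu_of \<mu>0 z * dz F z + nu_of \<nu>0 z * cnj (dz F z)"
    unfolding F_def beltrami_at_polar_map_iff[OF z d1 d2] \<mu>0_def \<nu>0_def
      beltrami_relation_iff_ode[OF k_eq(1,2), unfolded k_eq(3,4)] by simp
  ultimately show ?thesis ..
qed

lemma has_real_derivative_shift_2pi:
  assumes "periodic2pi f"
  shows "(f has_real_derivative D) (at (t + 2 * pi)) \<longleftrightarrow> (f has_real_derivative D) (at t)"
proof -
  have "(\<lambda>x. f (x + 2 * pi)) = f"
    using assms by (simp add: periodic2pi_def)
  then show ?thesis
    using DERIV_shift[of f D t "2 * pi"] by simp
qed

lemma polar_ode_shift_2pi:
  assumes "periodic2pi \<eta>1" "periodic2pi \<eta>2" "periodic2pi k1" "periodic2pi k2"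
  shows "polar_ode \<alpha> \<eta>1 \<eta>2 k1 k2 (t + 2 * pi) \<longleftrightarrow> polar_ode \<alpha> \<eta>1 \<eta>2 k1 k2 t"
  using assms by (simp add: polar_ode_def has_real_derivative_shift_2pi periodic2pi_def)

lemma beltrami_polar_map_imp_polar_ode_on_principal_angles:
  fixes \<alpha> :: real and \<eta>1 \<eta>2 \<mu>0 \<nu>0 :: "real \<Rightarrow> real"
  defines "k1 \<equiv> \<lambda>t. (1 + \<mu>0 t + \<nu>0 t) / (1 - \<mu>0 t - \<nu>0 t)"
    and "k2 \<equiv> \<lambda>t. (1 - \<mu>0 t + \<nu>0 t) / (1 + \<mu>0 t - \<nu>0 t)"
  assumes beltrami: "beltrami_ae (polar_map \<alpha> \<eta>1 \<eta>2) (mu_of \<mu>0) (nu_of \<nu>0)"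
  shows "negligible {t. -pi < t \<and> t < pi \<and>
           \<not> (\<bar>\<mu>0 t\<bar> + \<bar>\<nu>0 t\<bar> < 1 \<longrightarrow> polar_ode \<alpha> \<eta>1 \<eta>2 k1 k2 t)}"
proof -
  let ?F = "polar_map \<alpha> \<eta>1 \<eta>2"
  define bad where "bad = {z. \<not> (?F differentiable (at z) \<and>
                             dzbar ?F z = mu_of \<mu>0 z * dz ?F z + nu_of \<nu>0 z * cnj (dz ?F z))}"
  have "negligible bad"
    using beltrami unfolding beltrami_ae_def AE_lborel_iff_negligible bad_def .
  then have "negligible {t. -pi < t \<and> t < pi \<and> (\<forall>s. exp (Complex s t) \<in> bad)}"
    by (rule negligible_rays_contained_in)
  moreover have "\<bar>\<mu>0 t\<bar> + \<bar>\<nu>0 t\<bar> < 1 \<longrightarrow> polar_ode \<alpha> \<eta>1 \<eta>2 k1 k2 t"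
    if "-pi < t" "t < pi" "exp (Complex s t) \<notin> bad" for s t
    using that polar_ode_if_beltrami_at[of t \<mu>0 \<nu>0 \<alpha> \<eta>1 \<eta>2 s]
    unfolding bad_def k1_def k2_def by blast
  then have "{t. -pi < t \<and> t < pi \<and> \<not> (\<bar>\<mu>0 t\<bar> + \<bar>\<nu>0 t\<bar> < 1 \<longrightarrow> polar_ode \<alpha> \<eta>1 \<eta>2 k1 k2 t)}
      \<subseteq> {t. -pi < t \<and> t < pi \<and> (\<forall>s. exp (Complex s t) \<in> bad)}"
    by blast
  ultimately show ?thesis
    by (rule negligible_subset)
qed

lemma beltrami_polar_map_imp_polar_ode:
  fixes \<alpha> :: real and \<eta>1 \<eta>2 \<mu>0 \<nu>0 :: "real \<Rightarrow> real"
  defines "k1 \<equiv> \<lambda>t. (1 + \<mu>0 t + \<nu>0 t) / (1 - \<mu>0 t - \<nu>0 t)"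
    and "k2 \<equiv> \<lambda>t. (1 - \<mu>0 t + \<nu>0 t) / (1 + \<mu>0 t - \<nu>0 t)"
  assumes periodic: "periodic2pi \<eta>1" "periodic2pi \<eta>2" "periodic2pi \<mu>0" "periodic2pi \<nu>0"
    and bound: "AE t in lborel. \<bar>\<mu>0 t\<bar> + \<bar>\<nu>0 t\<bar> < 1"
    and beltrami: "beltrami_ae (polar_map \<alpha> \<eta>1 \<eta>2) (mu_of \<mu>0) (nu_of \<nu>0)"
  shows "AE t in lborel. k1 t > 0 \<and> k2 t > 0 \<and> polar_ode \<alpha> \<eta>1 \<eta>2 k1 k2 t"
proof -
  define Q where "Q t \<longleftrightarrow> \<bar>\<mu>0 t\<bar> + \<bar>\<nu>0 t\<bar> < 1 \<longrightarrow> polar_ode \<alpha> \<eta>1 \<eta>2 k1 k2 t" for t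
  have "negligible {t. -pi < t \<and> t < -pi + 2 * pi \<and> \<not> Q t}"
    using beltrami_polar_map_imp_polar_ode_on_principal_angles[OF beltrami]
    unfolding Q_def k1_def k2_def by simp
  moreover have "periodic2pi k1" "periodic2pi k2"
    using periodic(3,4) by (simp_all add: periodic2pi_def k1_def k2_def)
  then have "Q (t + 2 * pi) \<longleftrightarrow> Q t" for t
    using periodic polar_ode_shift_2pi by (simp add: Q_def periodic2pi_def)
  ultimately have "AE t in lborel. Q t"
    by (intro AE_periodic_if_negligible_on_period[where p = "2 * pi" and a = "-pi"]) auto
  then show ?thesis
    using bound
  proof eventually_elim
    case (elim t)
    then have "1 - \<mu>0 t - \<nu>0 t > 0" "1 + \<mu>0 t + \<nu>0 t > 0" "1 - \<mu>0 t + \<nu>0 t > 0" "1 + \<mu>0 t - \<nu>0 t > 0"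
      by linarith+
    then have "k1 t > 0" "k2 t > 0"
      by (simp_all only: k1_def k2_def divide_pos_pos)
    with elim show ?case
      unfolding Q_def by blast
  qed
qed

lemma polar_ode_imp_beltrami_polar_map:
  fixes \<alpha> :: real and \<eta>1 \<eta>2 k1 k2 :: "real \<Rightarrow> real"
  assumes "AE t in lborel. k1 t > 0 \<and> k2 t > 0 \<and> polar_ode \<alpha> \<eta>1 \<eta>2 k1 k2 t"
  shows "beltrami_ae (polar_map \<alpha> \<eta>1 \<eta>2)
           (mu_of (\<lambda>t. (k1 t - k2 t) / (1 + k1 t + k2 t + k1 t * k2 t)))
           (nu_of (\<lambda>t. (k1 t * k2 t - 1) / (1 + k1 t + k2 t + k1 t * k2 t)))"
    (is "beltrami_ae ?F ?\<mu> ?\<nu>")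
proof -
  define N where "N = {t. \<not> (k1 t > 0 \<and> k2 t > 0 \<and> polar_ode \<alpha> \<eta>1 \<eta>2 k1 k2 t)}"
  have "negligible N"
    using assms unfolding N_def AE_lborel_iff_negligible .
  moreover have "negligible {z :: complex. Im z = 0}"
    using negligible_hyperplane[of \<i> 0] by (simp add: inner_complex_def)
  ultimately have "negligible ({z. Im z = 0} \<union> {z. z \<noteq> 0 \<and> Arg z \<in> N})"
    by (intro negligible_Un negligible_Arg_vimage)
  moreover have "{z. \<not> (?F differentiable (at z) \<and> dzbar ?F z = ?\<mu> z * dz ?F z + ?\<nu> z * cnj (dz ?F z))}
      \<subseteq> {z. Im z = 0} \<union> {z. z \<noteq> 0 \<and> Arg z \<in> N}"
  proof (rule subsetI, rule ccontr)
    fix z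
    assume bad: "z \<in> {z. \<not> (?F differentiable (at z) \<and> dzbar ?F z = ?\<mu> z * dz ?F z + ?\<nu> z * cnj (dz ?F z))}"
      and "z \<notin> {z. Im z = 0} \<union> {z. z \<noteq> 0 \<and> Arg z \<in> N}"
    then have "z \<notin> \<real>\<^sub>\<le>\<^sub>0" and "Arg z \<notin> N"
      by (auto simp: complex_nonpos_Reals_iff)
    with bad show False
      using beltrami_at_if_polar_ode[of z k1 k2 \<alpha> \<eta>1 \<eta>2] by (simp add: N_def)
  qed
  ultimately show ?thesis
    unfolding beltrami_ae_def AE_lborel_iff_negligible by (rule negligible_subset)
qed

theorem proposition1:
  fixes \<alpha> :: real and \<eta>1 \<eta>2 :: "real \<Rightarrow> real"
  assumes "\<alpha> > 0"
    and "W12_loc \<eta>1" and "W12_loc \<eta>2"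
    and "periodic2pi \<eta>1" and "periodic2pi \<eta>2"
  shows "(\<forall>\<mu>0 \<nu>0 :: real \<Rightarrow> real.
            \<mu>0 \<in> borel_measurable lborel \<and> \<nu>0 \<in> borel_measurable lborel \<and>
            bounded (range \<mu>0) \<and> bounded (range \<nu>0) \<and>
            periodic2pi \<mu>0 \<and> periodic2pi \<nu>0 \<and>
            (\<exists>c<1. AE t in lborel. \<bar>\<mu>0 t\<bar> + \<bar>\<nu>0 t\<bar> \<le> c) \<and>
            beltrami_ae (polar_map \<alpha> \<eta>1 \<eta>2) (mu_of \<mu>0) (nu_of \<nu>0)
          \<longrightarrow>
            (let k1 = (\<lambda>t. (1 + \<mu>0 t + \<nu>0 t) / (1 - \<mu>0 t - \<nu>0 t));
                 k2 = (\<lambda>t. (1 - \<mu>0 t + \<nu>0 t) / (1 + \<mu>0 t - \<nu>0 t))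
             in AE t in lborel. k1 t > 0 \<and> k2 t > 0 \<and>
                  (\<eta>1 has_real_derivative (- \<alpha> / k2 t * \<eta>2 t)) (at t) \<and>
                  (\<eta>2 has_real_derivative (\<alpha> * k1 t * \<eta>1 t)) (at t)))
       \<and>
         (\<forall>k1 k2 :: real \<Rightarrow> real.
            periodic2pi k1 \<and> periodic2pi k2 \<and>
            (\<exists>m M. 0 < m \<and> (\<forall>t. m \<le> k1 t \<and> k1 t \<le> M \<and> m \<le> k2 t \<and> k2 t \<le> M)) \<and>
            (AE t in lborel. (\<eta>1 has_real_derivative (- \<alpha> / k2 t * \<eta>2 t)) (at t) \<and>
                             (\<eta>2 has_real_derivative (\<alpha> * k1 t * \<eta>1 t)) (at t))
          \<longrightarrow>
            beltrami_ae (polar_map \<alpha> \<eta>1 \<eta>2)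
              (mu_of (\<lambda>t. (k1 t - k2 t) / (1 + k1 t + k2 t + k1 t * k2 t)))
              (nu_of (\<lambda>t. (k1 t * k2 t - 1) / (1 + k1 t + k2 t + k1 t * k2 t))))"
proof (intro conjI allI impI, goal_cases)
  case (1 \<mu>0 \<nu>0)
  then obtain c where "c < 1" "AE t in lborel. \<bar>\<mu>0 t\<bar> + \<bar>\<nu>0 t\<bar> \<le> c"
    and "periodic2pi \<mu>0" "periodic2pi \<nu>0" "beltrami_ae (polar_map \<alpha> \<eta>1 \<eta>2) (mu_of \<mu>0) (nu_of \<nu>0)"
    by blast
  moreover from this(1,2) have "AE t in lborel. \<bar>\<mu>0 t\<bar> + \<bar>\<nu>0 t\<bar> < 1"
    by (auto elim: eventually_mono)
  ultimately show ?case
    unfolding Let_def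
    using beltrami_polar_map_imp_polar_ode[OF assms(4,5), of \<mu>0 \<nu>0 \<alpha>, unfolded polar_ode_def] by blast
next
  case (2 k1 k2)
  then obtain m where "0 < m" "\<And>t. m \<le> k1 t \<and> m \<le> k2 t"
    by blast
  then have "AE t in lborel. k1 t > 0 \<and> k2 t > 0 \<and> polar_ode \<alpha> \<eta>1 \<eta>2 k1 k2 t"
    using 2 by (auto simp: polar_ode_def elim!: eventually_mono intro: order.strict_trans2)
  then show ?case
    by (rule polar_ode_imp_beltrami_polar_map)
qed

end
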